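(* Let $q$ be a prime number. Then the quasivariety $\mathcal{Q}(\mathbf{ŁV}_{q+1}\times\mathbf{ŁV}_2)$ is axiomatized by the axioms of MV-algebras, together with an identity (in one variable) axiomatizing the variety $\mathcal{V}(\mathbf{ŁV}_{q+1})$ relative to MV-algebras, together with the quasi-identity $$q(x\wedge\neg x)\approx1\ \Rightarrow\ y\vee\neg y\approx1.$$
   Context: MV-algebras are algebras $(A,\oplus,\neg,0)$ (with $1=\neg0$); $\mathbf{ŁV}_{n+1}$ is the MV-chain on $\{0,\frac1n,\dots,1\}$ with $\neg x=1-x$, $x\oplus y=\min\{1,x+y\}$; $x\vee y=\max$, $x\wedge y=\min$ in these chains (in general $x\vee y=\neg(\neg x\oplus y)\oplus y$, $x\wedge y=\neg(\neg x\vee\neg y)$). $qz$ denotes $z\oplus\cdots\oplus z$ ($q$ times). $\mathcal{Q}(K)$ and $\mathcal{V}(K)$ denote the quasivariety and the variety generated by $K$. *)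

theory Defs
  imports Main "HOL-Computational_Algebra.Primes" Complex_Main
begin

record 'a mvalg =
  carrier :: "'a set"
  oplus :: "'a \<Rightarrow> 'a \<Rightarrow> 'a"
  neg :: "'a \<Rightarrow> 'a"
  zero :: "'a"

definition mv_struct :: "'a mvalg \<Rightarrow> bool" where
  "mv_struct A \<longleftrightarrow> zero A \<in> carrier A \<and>
     (\<forall>x\<in>carrier A. neg A x \<in> carrier A) \<and>
     (\<forall>x\<in>carrier A. \<forall>y\<in>carrier A. oplus A x y \<in> carrier A)"

definition is_MV :: "'a mvalg \<Rightarrow> bool" where
  "is_MV A \<longleftrightarrow> mv_struct A \<and>
    (\<forall>x\<in>carrier A. \<forall>y\<in>carrier A. \<forall>z\<in>carrier A.
        oplus A x (oplus A y z) = oplus A (oplus A x y) z) \<and>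
    (\<forall>x\<in>carrier A. \<forall>y\<in>carrier A. oplus A x y = oplus A y x) \<and>
    (\<forall>x\<in>carrier A. oplus A x (zero A) = x) \<and>
    (\<forall>x\<in>carrier A. neg A (neg A x) = x) \<and>
    (\<forall>x\<in>carrier A. oplus A x (neg A (zero A)) = neg A (zero A)) \<and>
    (\<forall>x\<in>carrier A. \<forall>y\<in>carrier A.
        oplus A (neg A (oplus A (neg A x) y)) y = oplus A (neg A (oplus A (neg A y) x)) x)"

datatype mvterm = Var nat | Zero | Neg mvterm | Oplus mvterm mvterm

fun eval :: "'a mvalg \<Rightarrow> (nat \<Rightarrow> 'a) \<Rightarrow> mvterm \<Rightarrow> 'a" where
  "eval A v (Var i) = v i"
| "eval A v Zero = zero A"
| "eval A v (Neg t) = neg A (eval A v t)"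
| "eval A v (Oplus s t) = oplus A (eval A v s) (eval A v t)"

fun tvars :: "mvterm \<Rightarrow> nat set" where
  "tvars (Var i) = {i}"
| "tvars Zero = {}"
| "tvars (Neg t) = tvars t"
| "tvars (Oplus s t) = tvars s \<union> tvars t"

type_synonym mveq = "mvterm \<times> mvterm"
type_synonym mvqeq = "mveq list \<times> mveq"

definition holds_eq :: "'a mvalg \<Rightarrow> (nat \<Rightarrow> 'a) \<Rightarrow> mveq \<Rightarrow> bool" where
  "holds_eq A v e \<longleftrightarrow> eval A v (fst e) = eval A v (snd e)"

definition sat_q :: "'a mvalg \<Rightarrow> mvqeq \<Rightarrow> bool" where
  "sat_q A Q \<longleftrightarrow> (\<forall>v. (\<forall>i. v i \<in> carrier A) \<longrightarrow>
      (\<forall>e\<in>set (fst Q). holds_eq A v e) \<longrightarrow> holds_eq A v (snd Q))"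

definition sat_id :: "'a mvalg \<Rightarrow> mveq \<Rightarrow> bool" where
  "sat_id A e \<longleftrightarrow> sat_q A ([], e)"

text \<open>Membership of A in the quasivariety generated by B: A satisfies every
  quasi-identity valid in B (the smallest quasi-equational class containing B).\<close>
definition in_Q :: "'a mvalg \<Rightarrow> 'b mvalg \<Rightarrow> bool" where
  "in_Q A B \<longleftrightarrow> mv_struct A \<and> (\<forall>Q. sat_q B Q \<longrightarrow> sat_q A Q)"

text \<open>Membership of A in the variety generated by B: A satisfies every identity valid in B.\<close>
definition in_V :: "'a mvalg \<Rightarrow> 'b mvalg \<Rightarrow> bool" where
  "in_V A B \<longleftrightarrow> mv_struct A \<and> (\<forall>e. sat_id B e \<longrightarrow> sat_id A e)"

definition One :: mvterm where "One = Neg Zero"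
definition Join :: "mvterm \<Rightarrow> mvterm \<Rightarrow> mvterm" where
  "Join s t = Oplus (Neg (Oplus (Neg s) t)) t"
definition Meet :: "mvterm \<Rightarrow> mvterm \<Rightarrow> mvterm" where
  "Meet s t = Neg (Join (Neg s) (Neg t))"

fun tmult :: "nat \<Rightarrow> mvterm \<Rightarrow> mvterm" where
  "tmult 0 t = Zero"
| "tmult (Suc 0) t = t"
| "tmult (Suc (Suc n)) t = Oplus (tmult (Suc n) t) t"

section \<open>The chains \<L>V_{n+1} and the product\<close>

definition LV :: "nat \<Rightarrow> real mvalg" where
  "LV n = \<lparr> carrier = {real k / real n | k. k \<le> n},
            oplus = (\<lambda>x y. min 1 (x + y)), neg = (\<lambda>x. 1 - x), zero = 0 \<rparr>"

definition prod_alg :: "'a mvalg \<Rightarrow> 'b mvalg \<Rightarrow> ('a \<times> 'b) mvalg" where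
  "prod_alg A B = \<lparr> carrier = carrier A \<times> carrier B,
      oplus = (\<lambda>x y. (oplus A (fst x) (fst y), oplus B (snd x) (snd y))),
      neg = (\<lambda>x. (neg A (fst x), neg B (snd x))),
      zero = (zero A, zero B) \<rparr>"

definition qi5 :: "nat \<Rightarrow> mvqeq" where
  "qi5 q = ([(tmult q (Meet (Var 0) (Neg (Var 0))), One)],
            (Join (Var 1) (Neg (Var 1)), One))"

end

theory Submission
  imports Defs
begin

text \<open>Let \<open>B = \<L>V\<^sub>q\<^sub>+\<^sub>1 \<times> \<L>V\<^sub>2\<close>. The MV-axioms and the identities of \<open>\<L>V\<^sub>q\<^sub>+\<^sub>1\<close> hold in \<open>B\<close>,
  and so does the quasi-identity, since its premise fails in the Boolean factor.
  Conversely, let \<open>A\<close> be an MV-algebra in \<open>\<V>(\<L>V\<^sub>q\<^sub>+\<^sub>1)\<close> satisfying the quasi-identity, and let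
  \<open>\<And>\<^sub>i s\<^sub>i \<approx> t\<^sub>i \<Rightarrow> s \<approx> t\<close> be valid in \<open>B\<close>. In \<open>\<L>V\<^sub>q\<^sub>+\<^sub>1\<close> the terms \<open>\<not>q d(s, t)\<close> and \<open>q(x \<and> \<not>x)\<close> are the
  indicators of \<open>s = t\<close> and of \<open>x \<notin> {0, 1}\<close>, so the quasi-identity can be traded for an identity
  of \<open>\<L>V\<^sub>q\<^sub>+\<^sub>1\<close>, which then holds in \<open>A\<close>. If the premises have a Boolean solution \<open>b\<close>, pairing any
  solution in \<open>\<L>V\<^sub>q\<^sub>+\<^sub>1\<close> with \<open>b\<close> gives a solution in \<open>B\<close>; hence \<open>\<And>\<^sub>i[s\<^sub>i = t\<^sub>i] \<rightarrow> [s = t] \<approx> 1\<close>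
  holds in \<open>\<L>V\<^sub>q\<^sub>+\<^sub>1\<close>. Otherwise every solution has a non-Boolean coordinate among the variables
  occurring, which a term \<open>z\<close> selects, and \<open>\<And>\<^sub>i[s\<^sub>i = t\<^sub>i] \<rightarrow> q(z \<and> \<not>z) \<approx> 1\<close> holds in \<open>\<L>V\<^sub>q\<^sub>+\<^sub>1\<close>; in \<open>A\<close>
  the quasi-identity then turns \<open>q(z \<and> \<not>z) = 1\<close> into \<open>0 = 1\<close>, so \<open>A\<close> is trivial.\<close>

fun tsubst :: "(nat \<Rightarrow> mvterm) \<Rightarrow> mvterm \<Rightarrow> mvterm" where
  "tsubst \<sigma> (Var i) = \<sigma> i"
| "tsubst \<sigma> Zero = Zero"
| "tsubst \<sigma> (Neg t) = Neg (tsubst \<sigma> t)"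
| "tsubst \<sigma> (Oplus s t) = Oplus (tsubst \<sigma> s) (tsubst \<sigma> t)"

definition Dist :: "mvterm \<Rightarrow> mvterm \<Rightarrow> mvterm" where
  "Dist s t = Oplus (Neg (Oplus (Neg s) t)) (Neg (Oplus (Neg t) s))"

definition Imp :: "mvterm \<Rightarrow> mvterm \<Rightarrow> mvterm" where
  "Imp s t = Oplus (Neg s) t"

definition Cond :: "mvterm \<Rightarrow> mvterm \<Rightarrow> mvterm \<Rightarrow> mvterm" where
  "Cond b s t = Join (Meet b s) (Meet (Neg b) t)"

text \<open>On \<open>\<L>V\<^sub>q\<^sub>+\<^sub>1\<close> two distinct points are at distance at least \<open>1/q\<close>, and every point
  other than \<open>0, 1\<close> is at distance at least \<open>1/q\<close> from both; so \<open>EqInd q s t\<close> is the indicator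
  of \<open>s = t\<close> and \<open>NonBool q t\<close> the indicator of \<open>t \<notin> {0, 1}\<close>.\<close>

definition EqInd :: "nat \<Rightarrow> mvterm \<Rightarrow> mvterm \<Rightarrow> mvterm" where
  "EqInd q s t = Neg (tmult q (Dist s t))"

definition NonBool :: "nat \<Rightarrow> mvterm \<Rightarrow> mvterm" where
  "NonBool q t = tmult q (Meet t (Neg t))"

fun AllEqInd :: "nat \<Rightarrow> mveq list \<Rightarrow> mvterm" where
  "AllEqInd q [] = One"
| "AllEqInd q (e # es) = Meet (EqInd q (fst e) (snd e)) (AllEqInd q es)"

fun PickNonBool :: "nat \<Rightarrow> nat \<Rightarrow> mvterm" where
  "PickNonBool q 0 = Zero"
| "PickNonBool q (Suc k) = Cond (NonBool q (Var k)) (Var k) (PickNonBool q k)"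

lemma qi5_eq: "qi5 q = ([(NonBool q (Var 0), One)], (Join (Var 1) (Neg (Var 1)), One))"
  by (simp add: qi5_def NonBool_def)

lemma tsubst_tmult [simp]: "tsubst \<sigma> (tmult n t) = tmult n (tsubst \<sigma> t)"
  by (induction n t rule: tmult.induct) auto

lemma tsubst_derived [simp]:
  "tsubst \<sigma> One = One"
  "tsubst \<sigma> (Join s t) = Join (tsubst \<sigma> s) (tsubst \<sigma> t)"
  "tsubst \<sigma> (Meet s t) = Meet (tsubst \<sigma> s) (tsubst \<sigma> t)"
  "tsubst \<sigma> (Dist s t) = Dist (tsubst \<sigma> s) (tsubst \<sigma> t)"
  "tsubst \<sigma> (Imp s t) = Imp (tsubst \<sigma> s) (tsubst \<sigma> t)"
  "tsubst \<sigma> (Cond b s t) = Cond (tsubst \<sigma> b) (tsubst \<sigma> s) (tsubst \<sigma> t)"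
  "tsubst \<sigma> (EqInd q s t) = EqInd q (tsubst \<sigma> s) (tsubst \<sigma> t)"
  "tsubst \<sigma> (NonBool q t) = NonBool q (tsubst \<sigma> t)"
  by (simp_all add: One_def Join_def Meet_def Dist_def Imp_def Cond_def EqInd_def NonBool_def)

lemma eval_tsubst: "eval A v (tsubst \<sigma> t) = eval A (\<lambda>i. eval A v (\<sigma> i)) t"
  by (induction t) auto

lemma eval_tsubst_cong:
  "(\<And>i. eval A v (\<sigma> i) = eval A v (\<tau> i)) \<Longrightarrow> eval A v (tsubst \<sigma> t) = eval A v (tsubst \<tau> t)"
  by (simp add: eval_tsubst)

lemma eval_One [simp]: "eval A v One = neg A (zero A)"
  by (simp add: One_def)

lemma eval_cong_tvars: "(\<And>i. i \<in> tvars t \<Longrightarrow> v i = w i) \<Longrightarrow> eval A v t = eval A w t"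
  by (induction t) auto

lemma finite_tvars: "finite (tvars t)"
  by (induction t) auto

lemma tvars_bounded: "\<exists>N. \<forall>e\<in>set es. tvars (fst e) \<union> tvars (snd e) \<subseteq> {..<N}"
proof -
  have "finite (\<Union>e\<in>set es. tvars (fst e) \<union> tvars (snd e))"
    by (simp add: finite_tvars)
  then show ?thesis
    by (auto simp: finite_nat_set_iff_bounded subset_eq)
qed

lemma eval_in_carrier: "mv_struct A \<Longrightarrow> \<forall>i. v i \<in> carrier A \<Longrightarrow> eval A v t \<in> carrier A"
  by (induction t) (auto simp: mv_struct_def)

lemma eval_prod_alg: "eval (prod_alg A B) u t = (eval A (fst \<circ> u) t, eval B (snd \<circ> u) t)"
  by (induction t) (auto simp: prod_alg_def)

lemma prod_alg_simps [simp]: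
  "carrier (prod_alg A B) = carrier A \<times> carrier B"
  "neg (prod_alg A B) x = (neg A (fst x), neg B (snd x))"
  "zero (prod_alg A B) = (zero A, zero B)"
  by (simp_all add: prod_alg_def)

lemma sat_q_Nil: "sat_q A ([], e) \<longleftrightarrow> (\<forall>v. (\<forall>i. v i \<in> carrier A) \<longrightarrow> holds_eq A v e)"
  by (simp add: sat_q_def)

lemma sat_id_prod_alg:
  assumes "sat_id A e" and "sat_id B e"
  shows "sat_id (prod_alg A B) e"
  unfolding sat_id_def sat_q_Nil
proof (intro allI impI)
  fix u :: "nat \<Rightarrow> _" assume "\<forall>i. u i \<in> carrier (prod_alg A B)"
  then have "\<forall>i. (fst \<circ> u) i \<in> carrier A" "\<forall>i. (snd \<circ> u) i \<in> carrier B"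
    by (auto simp: mem_Times_iff)
  then show "holds_eq (prod_alg A B) u e"
    using assms by (simp add: sat_id_def sat_q_Nil holds_eq_def eval_prod_alg)
qed

lemma sat_id_if_in_Q: "in_Q A B \<Longrightarrow> sat_id B e \<Longrightarrow> sat_id A e"
  unfolding in_Q_def sat_id_def by blast

lemma LV_ops [simp]:
  "oplus (LV n) = (\<lambda>x y. min 1 (x + y))" "neg (LV n) = (\<lambda>x. 1 - x)" "zero (LV n) = 0"
  by (simp_all add: LV_def)

lemma carrier_LV: "carrier (LV n) = {real k / real n | k. k \<le> n}"
  by (simp add: LV_def)

(* Stated with Suc 0, the simp normal form of 1. *)
lemma carrier_LV_1 [simp]: "carrier (LV (Suc 0)) = {0, 1}"
  by (auto simp: carrier_LV le_Suc_eq intro: exI[of _ 0] exI[of _ 1])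

lemma carrier_LV_1_subset: "0 < q \<Longrightarrow> carrier (LV 1) \<subseteq> carrier (LV q)"
proof -
  assume "0 < q"
  then have "0 \<in> carrier (LV q)" "1 \<in> carrier (LV q)"
    unfolding carrier_LV by (auto intro!: exI[of _ 0] exI[of _ q])
  then show ?thesis by simp
qed

lemma carrier_LV_bounds: "x \<in> carrier (LV n) \<Longrightarrow> 0 \<le> x \<and> x \<le> 1"
  by (auto simp: carrier_LV divide_le_eq_1)

lemma eval_LV_indep: "eval (LV n) v t = eval (LV m) v t"
  by (induction t) auto

lemma mv_struct_LV: "0 < n \<Longrightarrow> mv_struct (LV n)"
proof -
  assume n: "0 < n"
  have oplus: "real (min n (k + l)) / real n = min 1 (real k / real n + real l / real n)" for k l
    using n by (auto simp: min_def add_divide_distrib[symmetric] divide_le_eq_1 le_divide_eq_1)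
  have neg: "real (n - k) / real n = 1 - real k / real n" if "k \<le> n" for k
    using n that by (simp add: of_nat_diff diff_divide_distrib)
  show ?thesis unfolding mv_struct_def carrier_LV
  proof (intro conjI ballI)
    show "zero (LV n) \<in> {real k / real n |k. k \<le> n}" by (auto intro: exI[of _ 0])
    fix x assume "x \<in> {real k / real n |k. k \<le> n}"
    then obtain k where k: "x = real k / real n" "k \<le> n" by auto
    show "neg (LV n) x \<in> {real k / real n |k. k \<le> n}"
      using neg[OF k(2)] k by (auto intro!: exI[of _ "n - k"])
    fix y assume "y \<in> {real k / real n |k. k \<le> n}"
    then obtain l where l: "y = real l / real n" "l \<le> n" by auto
    show "oplus (LV n) x y \<in> {real k / real n |k. k \<le> n}"
      using oplus[of k l] k l by (auto intro!: exI[of _ "min n (k + l)"])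
  qed
qed

lemma sat_id_LV_1_if_sat_id_LV:
  assumes "0 < q" and "sat_id (LV q) e"
  shows "sat_id (LV 1) e"
  unfolding sat_id_def sat_q_Nil holds_eq_def
proof (intro allI impI)
  fix v :: "nat \<Rightarrow> real" assume "\<forall>i. v i \<in> carrier (LV 1)"
  then have "\<forall>i. v i \<in> carrier (LV q)" using carrier_LV_1_subset[OF assms(1)] by blast
  then show "eval (LV 1) v (fst e) = eval (LV 1) v (snd e)"
    using assms(2) eval_LV_indep by (metis sat_id_def sat_q_Nil holds_eq_def)
qed

lemma eval_LV_tmult:
  "0 \<le> eval (LV n) v t \<Longrightarrow> eval (LV n) v t \<le> 1 \<Longrightarrow> eval (LV n) v (tmult k t) = min 1 (real k * eval (LV n) v t)"
  by (induction k t rule: tmult.induct) (auto simp: min_def algebra_simps)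

lemma eval_LV_Join:
  "eval (LV n) v s \<le> 1 \<Longrightarrow> eval (LV n) v t \<le> 1 \<Longrightarrow>
   eval (LV n) v (Join s t) = max (eval (LV n) v s) (eval (LV n) v t)"
  by (auto simp: Join_def min_def max_def)

lemma eval_LV_Meet:
  "0 \<le> eval (LV n) v s \<Longrightarrow> 0 \<le> eval (LV n) v t \<Longrightarrow>
   eval (LV n) v (Meet s t) = min (eval (LV n) v s) (eval (LV n) v t)"
  by (auto simp: Meet_def Join_def min_def max_def)

lemma eval_LV_Dist:
  "0 \<le> eval (LV n) v s \<Longrightarrow> eval (LV n) v s \<le> 1 \<Longrightarrow> 0 \<le> eval (LV n) v t \<Longrightarrow> eval (LV n) v t \<le> 1 \<Longrightarrow>
   eval (LV n) v (Dist s t) = \<bar>eval (LV n) v s - eval (LV n) v t\<bar>"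
  by (auto simp: Dist_def min_def)

lemma LV_grid_dist:
  assumes "0 < q" "a \<in> carrier (LV q)" "b \<in> carrier (LV q)"
  shows "min 1 (real q * \<bar>a - b\<bar>) = (if a = b then 0 else 1)"
proof -
  obtain k l where kl: "a = real k / real q" "b = real l / real q"
    using assms by (auto simp: carrier_LV)
  have "real q * \<bar>a - b\<bar> = \<bar>real k - real l\<bar>"
    using assms(1) by (simp add: kl diff_divide_distrib[symmetric] abs_divide)
  moreover have "a \<noteq> b \<Longrightarrow> 1 \<le> \<bar>real k - real l\<bar>"
    using kl by auto
  ultimately show ?thesis by auto
qed

lemma LV_grid_min_compl:
  assumes "0 < q" "a \<in> carrier (LV q)"
  shows "min 1 (real q * min a (1 - a)) = (if a = 0 \<or> a = 1 then 0 else 1)"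
proof -
  obtain k where k: "a = real k / real q" "k \<le> q"
    using assms by (auto simp: carrier_LV)
  have qa: "real q * a = real k"
    using assms(1) k by simp
  have "real q * min a (1 - a) = min (real q * a) (real q * (1 - a))"
    using assms(1) by (simp add: min_def)
  also have "\<dots> = min (real k) (real q - real k)"
    using qa by (simp add: right_diff_distrib)
  finally have "real q * min a (1 - a) = min (real k) (real q - real k)" .
  moreover have "a \<noteq> 0 \<Longrightarrow> a \<noteq> 1 \<Longrightarrow> 1 \<le> min (real k) (real q - real k)"
    using k assms(1) by (auto simp: min_def)
  moreover have "a = 0 \<or> a = 1 \<Longrightarrow> min (real k) (real q - real k) = 0"
    using k assms(1) by (auto simp: min_def)
  ultimately show ?thesis by auto
qed

context
  fixes q :: nat and x :: "nat \<Rightarrow> real"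
  assumes q: "0 < q" and x: "\<forall>i. x i \<in> carrier (LV q)"
begin

lemma eval_LV_in_carrier: "eval (LV q) x t \<in> carrier (LV q)"
  using eval_in_carrier[OF mv_struct_LV[OF q] x] .

lemma eval_LV_bounds: "0 \<le> eval (LV q) x t" "eval (LV q) x t \<le> 1"
  using carrier_LV_bounds[OF eval_LV_in_carrier] by auto

lemma eval_LV_EqInd:
  "eval (LV q) x (EqInd q s t) = (if eval (LV q) x s = eval (LV q) x t then 1 else 0)"
  unfolding EqInd_def eval.simps LV_ops
  by (subst eval_LV_tmult) (use eval_LV_bounds[of s] eval_LV_bounds[of t] in
      \<open>simp_all add: eval_LV_Dist abs_le_iff
        LV_grid_dist[OF q eval_LV_in_carrier eval_LV_in_carrier]\<close>)

lemma eval_LV_NonBool: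
  "eval (LV q) x (NonBool q t) = (if eval (LV q) x t = 0 \<or> eval (LV q) x t = 1 then 0 else 1)"
  using LV_grid_min_compl[OF q eval_LV_in_carrier, of t]
  by (simp add: NonBool_def eval_LV_tmult eval_LV_Meet eval_LV_bounds)

lemma eval_LV_Cond:
  "eval (LV q) x b = 0 \<or> eval (LV q) x b = 1 \<Longrightarrow>
   eval (LV q) x (Cond b s t) = (if eval (LV q) x b = 1 then eval (LV q) x s else eval (LV q) x t)"
  using eval_LV_bounds by (auto simp: Cond_def eval_LV_Join eval_LV_Meet)

lemma eval_LV_AllEqInd:
  "eval (LV q) x (AllEqInd q es) = (if \<forall>e\<in>set es. holds_eq (LV q) x e then 1 else 0)"
  by (induction es) (auto simp: eval_LV_Meet eval_LV_EqInd holds_eq_def)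

lemma eval_LV_PickNonBool:
  "\<exists>j<N. x j \<noteq> 0 \<and> x j \<noteq> 1 \<Longrightarrow>
   eval (LV q) x (PickNonBool q N) \<noteq> 0 \<and> eval (LV q) x (PickNonBool q N) \<noteq> 1"
proof (induction N)
  case (Suc k)
  then show ?case
    by (cases "x k = 0 \<or> x k = 1") (auto simp: eval_LV_Cond eval_LV_NonBool less_Suc_eq)
qed simp

lemma eval_LV_Imp_AllEqInd:
  "((\<forall>e\<in>set es. holds_eq (LV q) x e) \<Longrightarrow> eval (LV q) x t = 1) \<Longrightarrow>
   eval (LV q) x (Imp (AllEqInd q es) t) = 1"
  using eval_LV_bounds[of t] by (auto simp: Imp_def eval_LV_AllEqInd)

end

text \<open>Validity in the standard MV-algebra \<open>[0, 1]\<close>: the operations of \<open>LV n\<close> do not depend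
  on \<open>n\<close>, so \<open>eval (LV 1)\<close> serves as evaluation on all of \<open>[0, 1]\<close>.\<close>

definition valid_std :: "mveq \<Rightarrow> bool" where
  "valid_std e \<longleftrightarrow> (\<forall>v. (\<forall>i. 0 \<le> v i \<and> v i \<le> 1) \<longrightarrow> holds_eq (LV 1) v e)"

lemma valid_stdI:
  assumes "\<And>v. 0 \<le> v 0 \<Longrightarrow> v 0 \<le> 1 \<Longrightarrow> 0 \<le> v 1 \<Longrightarrow> v 1 \<le> 1 \<Longrightarrow> 0 \<le> v 2 \<Longrightarrow> v 2 \<le> 1 \<Longrightarrow>
    eval (LV 1) v (fst e) = eval (LV 1) v (snd e)"
  shows "valid_std e"
  using assms by (simp add: valid_std_def holds_eq_def)

lemma sat_id_LV_if_valid_std: "valid_std e \<Longrightarrow> sat_id (LV n) e"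
  unfolding sat_id_def sat_q_Nil valid_std_def holds_eq_def
  by (metis carrier_LV_bounds eval_LV_indep)

definition mv_axioms :: "mveq list" where
  "mv_axioms =
    [(Oplus (Var 0) (Oplus (Var 1) (Var 2)), Oplus (Oplus (Var 0) (Var 1)) (Var 2)),
     (Oplus (Var 0) (Var 1), Oplus (Var 1) (Var 0)),
     (Oplus (Var 0) Zero, Var 0),
     (Neg (Neg (Var 0)), Var 0),
     (Oplus (Var 0) One, One),
     (Join (Var 0) (Var 1), Join (Var 1) (Var 0))]"

lemma is_MV_if_sat_id_mv_axioms:
  assumes "mv_struct A" and "\<forall>e\<in>set mv_axioms. sat_id A e"
  shows "is_MV A"
  unfolding is_MV_def
proof (intro conjI ballI)
  fix x y z assume "x \<in> carrier A" "y \<in> carrier A" "z \<in> carrier A"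
  define w where "w = (\<lambda>i::nat. if i = 0 then x else if i = 1 then y else z)"
  have "\<forall>i. w i \<in> carrier A"
    using \<open>x \<in> carrier A\<close> \<open>y \<in> carrier A\<close> \<open>z \<in> carrier A\<close> by (simp add: w_def)
  then have "\<forall>e\<in>set mv_axioms. holds_eq A w e"
    using assms(2) unfolding sat_id_def sat_q_Nil by blast
  then show "oplus A x (oplus A y z) = oplus A (oplus A x y) z"
    and "oplus A x y = oplus A y x"
    and "oplus A x (zero A) = x"
    and "neg A (neg A x) = x"
    and "oplus A x (neg A (zero A)) = neg A (zero A)"
    and "oplus A (neg A (oplus A (neg A x) y)) y = oplus A (neg A (oplus A (neg A y) x)) x"
    by (simp_all add: mv_axioms_def holds_eq_def Join_def w_def)
qed (fact assms(1))

lemma is_MV_eq_zero_if_zero_eq_one: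
  assumes "is_MV A" and "zero A = neg A (zero A)" and "x \<in> carrier A"
  shows "x = zero A"
proof -
  have "x = oplus A x (zero A)"
    using assms(1,3) by (simp add: is_MV_def)
  also have "\<dots> = oplus A x (neg A (zero A))"
    using assms(2) by (rule arg_cong)
  also have "\<dots> = neg A (zero A)"
    using assms(1,3) by (simp add: is_MV_def)
  finally show ?thesis
    using assms(2) by (rule trans_sym)
qed

lemma valid_std_mv_axioms: "\<forall>e\<in>set mv_axioms. valid_std e"
  unfolding mv_axioms_def
  by (simp, intro conjI valid_stdI) (auto simp: Join_def min_def)

lemma is_MV_if_in_Q: "in_Q A (prod_alg (LV m) (LV n)) \<Longrightarrow> is_MV A"
  using valid_std_mv_axioms
  by (metis in_Q_def is_MV_if_sat_id_mv_axioms sat_id_if_in_Q sat_id_LV_if_valid_std sat_id_prod_alg)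

lemma in_V_if_in_Q: "0 < q \<Longrightarrow> in_Q A (prod_alg (LV q) (LV 1)) \<Longrightarrow> in_V A (LV q)"
  unfolding in_V_def
  by (metis in_Q_def sat_id_if_in_Q sat_id_LV_1_if_sat_id_LV sat_id_prod_alg)

lemma sat_q_prod_qi5: "sat_q (prod_alg (LV q) (LV 1)) (qi5 q)"
proof -
  have "eval (prod_alg (LV q) (LV 1)) u (NonBool q (Var 0)) \<noteq> eval (prod_alg (LV q) (LV 1)) u One"
    if "\<forall>i. u i \<in> carrier (prod_alg (LV q) (LV 1))" for u
  proof -
    have "snd (u 0) \<in> carrier (LV 1)"
      using that by (simp add: mem_Times_iff)
    then have "snd (u 0) = 0 \<or> snd (u 0) = 1"
      by simp
    then have "eval (LV 1) (snd \<circ> u) (NonBool q (Var 0)) = 0"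
      by (subst NonBool_def, subst eval_LV_tmult) (auto simp: eval_LV_Meet)
    then show ?thesis
      by (simp add: eval_prod_alg)
  qed
  then show ?thesis
    by (simp add: sat_q_def qi5_eq holds_eq_def)
qed

lemma sat_id_LV_Imp_EqInd:
  assumes q: "0 < q" and Q: "sat_q (prod_alg (LV q) (LV 1)) (es, (s, t))"
    and b: "\<forall>i. b i \<in> carrier (LV 1)" "\<forall>e\<in>set es. holds_eq (LV 1) b e"
  shows "sat_id (LV q) (Imp (AllEqInd q es) (EqInd q s t), One)"
  unfolding sat_id_def sat_q_Nil holds_eq_def fst_conv snd_conv
proof (intro allI impI)
  fix x :: "nat \<Rightarrow> real" assume x: "\<forall>i. x i \<in> carrier (LV q)"
  define u where "u = (\<lambda>i. (x i, b i))"
  have u: "\<forall>i. u i \<in> carrier (prod_alg (LV q) (LV 1))" "fst \<circ> u = x" "snd \<circ> u = b"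
    using x b(1) by (auto simp: u_def)
  have "eval (LV q) x s = eval (LV q) x t" if "\<forall>e\<in>set es. holds_eq (LV q) x e"
  proof -
    have "\<forall>e\<in>set es. holds_eq (prod_alg (LV q) (LV 1)) u e"
      using that b(2) by (simp add: holds_eq_def eval_prod_alg u(2,3))
    then have "holds_eq (prod_alg (LV q) (LV 1)) u (s, t)"
      using Q u(1) by (simp add: sat_q_def)
    then show ?thesis
      by (simp add: holds_eq_def eval_prod_alg u(2))
  qed
  then show "eval (LV q) x (Imp (AllEqInd q es) (EqInd q s t)) = eval (LV q) x One"
    using eval_LV_Imp_AllEqInd[OF q x] eval_LV_EqInd[OF q x] by simp
qed

lemma sat_id_LV_Imp_NonBool:
  assumes q: "0 < q" and N: "\<forall>e\<in>set es. tvars (fst e) \<union> tvars (snd e) \<subseteq> {..<N}"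
    and no_Boolean_solution: "\<nexists>b. (\<forall>i. b i \<in> carrier (LV 1)) \<and> (\<forall>e\<in>set es. holds_eq (LV 1) b e)"
  shows "sat_id (LV q) (Imp (AllEqInd q es) (NonBool q (PickNonBool q N)), One)"
  unfolding sat_id_def sat_q_Nil holds_eq_def fst_conv snd_conv
proof (intro allI impI)
  fix x :: "nat \<Rightarrow> real" assume x: "\<forall>i. x i \<in> carrier (LV q)"
  have "\<exists>j<N. x j \<noteq> 0 \<and> x j \<noteq> 1" if sol: "\<forall>e\<in>set es. holds_eq (LV q) x e"
  proof (rule ccontr)
    assume "\<not> (\<exists>j<N. x j \<noteq> 0 \<and> x j \<noteq> 1)"
    define b where "b = (\<lambda>j. if j < N then x j else 0)"
    have "\<forall>i. b i \<in> carrier (LV 1)"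
      using \<open>\<not> (\<exists>j<N. x j \<noteq> 0 \<and> x j \<noteq> 1)\<close> by (auto simp: b_def)
    have agree: "eval (LV 1) b t = eval (LV q) x t" if "tvars t \<subseteq> {..<N}" for t
    proof -
      have "eval (LV q) b t = eval (LV q) x t"
        using that by (intro eval_cong_tvars) (auto simp: b_def)
      then show ?thesis by (metis eval_LV_indep)
    qed
    have "\<forall>e\<in>set es. holds_eq (LV 1) b e"
      using sol N agree by (simp add: holds_eq_def)
    with \<open>\<forall>i. b i \<in> carrier (LV 1)\<close> show False
      using no_Boolean_solution by blast
  qed
  then show "eval (LV q) x (Imp (AllEqInd q es) (NonBool q (PickNonBool q N))) = eval (LV q) x One"
    using eval_LV_Imp_AllEqInd[OF q x] eval_LV_NonBool[OF q x] eval_LV_PickNonBool[OF q x] by simp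
qed

context
  fixes A :: "'a mvalg" and q :: nat
  assumes V: "in_V A (LV q)" and q: "0 < q"
begin

lemma eval_eq_if_sat_id_LV:
  "sat_id (LV q) (l, r) \<Longrightarrow> \<forall>i. v i \<in> carrier A \<Longrightarrow> eval A v l = eval A v r"
  using V by (auto simp: in_V_def sat_id_def sat_q_Nil holds_eq_def)

lemma eval_tsubst_eq_if_sat_id_LV:
  assumes "sat_id (LV q) (l, r)" and v: "\<forall>i. v i \<in> carrier A"
  shows "eval A v (tsubst \<sigma> l) = eval A v (tsubst \<sigma> r)"
proof -
  have "\<forall>i. eval A v (\<sigma> i) \<in> carrier A"
    using V v eval_in_carrier by (auto simp: in_V_def)
  then show ?thesis
    unfolding eval_tsubst by (rule eval_eq_if_sat_id_LV[OF assms(1)])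
qed

lemma eval_tsubst_eq_if_valid_std:
  "valid_std (l, r) \<Longrightarrow> \<forall>i. v i \<in> carrier A \<Longrightarrow> eval A v (tsubst \<sigma> l) = eval A v (tsubst \<sigma> r)"
  by (rule eval_tsubst_eq_if_sat_id_LV[OF sat_id_LV_if_valid_std])

context
  fixes v :: "nat \<Rightarrow> 'a" assumes v: "\<forall>i. v i \<in> carrier A"
begin

lemma eval_EqInd_if_eq:
  assumes "eval A v s = eval A v t"
  shows "eval A v (EqInd q s t) = neg A (zero A)"
proof -
  have refl: "sat_id (LV q) (EqInd q (Var 0) (Var 0), One)"
    using eval_LV_EqInd[OF q] by (simp add: sat_id_def sat_q_Nil holds_eq_def)
  have "eval A v (EqInd q s t) = eval A v (tsubst (\<lambda>i. if i = 0 then s else t) (EqInd q (Var 0) (Var 1)))"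
    by simp
  also have "\<dots> = eval A v (tsubst (\<lambda>_. s) (EqInd q (Var 0) (Var 1)))"
    by (rule eval_tsubst_cong) (simp add: assms)
  also have "\<dots> = eval A v (tsubst (\<lambda>_. s) (EqInd q (Var 0) (Var 0)))"
    by simp
  also have "\<dots> = eval A v (tsubst (\<lambda>_. s) One)"
    by (rule eval_tsubst_eq_if_sat_id_LV[OF refl v])
  finally show ?thesis by simp
qed

lemma eq_if_eval_EqInd:
  assumes "eval A v (EqInd q s t) = neg A (zero A)"
  shows "eval A v s = eval A v t"
proof -
  have elim: "sat_id (LV q) (Var 0, Cond (EqInd q (Var 0) (Var 1)) (Var 1) (Var 0))"
    using eval_LV_Cond[OF q] eval_LV_EqInd[OF q] by (simp add: sat_id_def sat_q_Nil holds_eq_def)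
  have Cond_One: "valid_std (Cond One (Var 1) (Var 0), Var 1)"
    by (rule valid_stdI) (auto simp: Cond_def Join_def Meet_def min_def)
  let ?\<sigma> = "\<lambda>i. if i = 0 then s else t"
  have "eval A v s = eval A v (tsubst ?\<sigma> (Var 0))"
    by simp
  also have "\<dots> = eval A v (tsubst ?\<sigma> (Cond (EqInd q (Var 0) (Var 1)) (Var 1) (Var 0)))"
    by (rule eval_tsubst_eq_if_sat_id_LV[OF elim v])
  also have "\<dots> = eval A v (tsubst ?\<sigma> (Cond One (Var 1) (Var 0)))"
    using assms by (simp add: eval_tsubst Cond_def Join_def Meet_def One_def)
  also have "\<dots> = eval A v (tsubst ?\<sigma> (Var 1))"
    by (rule eval_tsubst_eq_if_valid_std[OF Cond_One v])
  finally show ?thesis by simp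
qed

lemma eval_AllEqInd_if_holds:
  "\<forall>e\<in>set es. holds_eq A v e \<Longrightarrow> eval A v (AllEqInd q es) = neg A (zero A)"
proof (induction es)
  case (Cons e es)
  have Meet_idem: "valid_std (Meet (Var 0) (Var 0), Var 0)"
    by (rule valid_stdI) (auto simp: Join_def Meet_def min_def)
  have "eval A v (AllEqInd q (e # es)) = eval A v (tsubst (\<lambda>_. One) (Meet (Var 0) (Var 0)))"
    using Cons eval_EqInd_if_eq by (simp add: eval_tsubst holds_eq_def Meet_def Join_def)
  also have "\<dots> = eval A v (tsubst (\<lambda>_. One) (Var 0))"
    by (rule eval_tsubst_eq_if_valid_std[OF Meet_idem v])
  finally show ?case by simp
qed simp

lemma eval_eq_One_if_Imp:
  assumes "eval A v s = neg A (zero A)" and "eval A v (Imp s t) = neg A (zero A)"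
  shows "eval A v t = neg A (zero A)"
proof -
  have Imp_One: "valid_std (Imp One (Var 0), Var 0)"
    by (rule valid_stdI) (auto simp: Imp_def min_def)
  have "eval A v t = eval A v (tsubst (\<lambda>_. t) (Imp One (Var 0)))"
    using eval_tsubst_eq_if_valid_std[OF Imp_One v, of "\<lambda>_. t"] by simp
  also have "\<dots> = eval A v (Imp s t)"
    using assms(1) by (simp add: eval_tsubst Imp_def One_def)
  finally show ?thesis
    using assms(2) by simp
qed

text \<open>Here the quasi-identity \<open>qi5\<close> enters: if \<open>q(z \<and> \<not>z) = 1\<close> then \<open>z \<or> \<not>z = 1\<close>, whereas
  \<open>q(z \<and> \<not>z) = q\<not>(z \<or> \<not>z)\<close> is an identity of \<open>[0, 1]\<close>.\<close>

lemma zero_eq_one_if_eval_NonBool: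
  assumes qi5: "sat_q A (qi5 q)" and "eval A v (NonBool q t) = neg A (zero A)"
  shows "zero A = neg A (zero A)"
proof -
  define w where "w = (\<lambda>_::nat. eval A v t)"
  have w: "\<forall>i. w i \<in> carrier A"
    using V v eval_in_carrier by (auto simp: in_V_def w_def)
  have NonBool_w: "eval A w (NonBool q (Var 0)) = neg A (zero A)"
    using assms(2) by (simp add: w_def flip: eval_tsubst[of A v "\<lambda>_. t"])
  then have "holds_eq A w (Join (Var 1) (Neg (Var 1)), One)"
    using qi5 w by (simp add: sat_q_def qi5_eq holds_eq_def)
  then have excluded_middle: "eval A w (Join (Var 0) (Neg (Var 0))) = neg A (zero A)"
    by (simp add: holds_eq_def Join_def w_def)
  have NonBool_Join: "valid_std (NonBool q (Var 0), tmult q (Neg (Join (Var 0) (Neg (Var 0)))))"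
    by (rule valid_stdI)
      (simp add: NonBool_def eval_LV_tmult eval_LV_Meet eval_LV_Join, simp add: Join_def min_def max_def)
  have tmult_Zero: "valid_std (tmult q (Neg One), Zero)"
    by (rule valid_stdI) (simp add: eval_LV_tmult One_def)
  have "neg A (zero A) = eval A w (tsubst Var (tmult q (Neg (Join (Var 0) (Neg (Var 0))))))"
    using NonBool_w eval_tsubst_eq_if_valid_std[OF NonBool_Join w, of Var] by simp
  also have "\<dots> = eval A w (tsubst (\<lambda>_. Join (Var 0) (Neg (Var 0))) (tmult q (Neg (Var 0))))"
    by simp
  also have "\<dots> = eval A w (tsubst (\<lambda>_. One) (tmult q (Neg (Var 0))))"
    using excluded_middle by (intro eval_tsubst_cong) simp
  also have "\<dots> = eval A w (tsubst Var (tmult q (Neg One)))"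
    by simp
  also have "\<dots> = zero A"
    using eval_tsubst_eq_if_valid_std[OF tmult_Zero w, of Var] by simp
  finally show ?thesis ..
qed

end

end

lemma sat_q_if_sat_q_prod:
  assumes q: "0 < q" and MV: "is_MV A" and V: "in_V A (LV q)" and qi5: "sat_q A (qi5 q)"
    and Q: "sat_q (prod_alg (LV q) (LV 1)) (es, (s, t))"
  shows "sat_q A (es, (s, t))"
  unfolding sat_q_def fst_conv snd_conv
proof (intro allI impI)
  fix v assume v: "\<forall>i. v i \<in> carrier A" and sol: "\<forall>e\<in>set es. holds_eq A v e"
  have prem: "eval A v (AllEqInd q es) = neg A (zero A)"
    using eval_AllEqInd_if_holds[OF V q v sol] .
  obtain N where N: "\<forall>e\<in>set es. tvars (fst e) \<union> tvars (snd e) \<subseteq> {..<N}"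
    using tvars_bounded by blast
  show "holds_eq A v (s, t)"
  proof (cases "\<exists>b. (\<forall>i. b i \<in> carrier (LV 1)) \<and> (\<forall>e\<in>set es. holds_eq (LV 1) b e)")
    case True
    then obtain b where b: "\<forall>i. b i \<in> carrier (LV 1)" "\<forall>e\<in>set es. holds_eq (LV 1) b e"
      by blast
    have "eval A v (Imp (AllEqInd q es) (EqInd q s t)) = neg A (zero A)"
      using eval_eq_if_sat_id_LV[OF V q sat_id_LV_Imp_EqInd[OF q Q b] v] by simp
    then have "eval A v (EqInd q s t) = neg A (zero A)"
      by (rule eval_eq_One_if_Imp[OF V q v prem])
    then show ?thesis
      unfolding holds_eq_def fst_conv snd_conv by (rule eq_if_eval_EqInd[OF V q v])
  next
    case False
    have "eval A v (Imp (AllEqInd q es) (NonBool q (PickNonBool q N))) = neg A (zero A)"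
      using eval_eq_if_sat_id_LV[OF V q sat_id_LV_Imp_NonBool[OF q N False] v] by simp
    then have "eval A v (NonBool q (PickNonBool q N)) = neg A (zero A)"
      by (rule eval_eq_One_if_Imp[OF V q v prem])
    then have trivial: "zero A = neg A (zero A)"
      by (rule zero_eq_one_if_eval_NonBool[OF V q v qi5])
    have "eval A v u \<in> carrier A" for u
      using MV v eval_in_carrier by (auto simp: is_MV_def)
    then have "eval A v s = zero A" "eval A v t = zero A"
      using is_MV_eq_zero_if_zero_eq_one[OF MV trivial] by blast+
    then show ?thesis
      by (simp add: holds_eq_def)
  qed
qed

theorem theorem5p6:
  fixes q :: nat and e :: mveq
  assumes "prime q"
    and "tvars (fst e) \<union> tvars (snd e) \<subseteq> {0}"
    and "\<And>(A :: 'a mvalg). is_MV A \<Longrightarrow> (sat_id A e \<longleftrightarrow> in_V A (LV q))"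
  shows "\<forall>(A :: 'a mvalg). in_Q A (prod_alg (LV q) (LV 1)) \<longleftrightarrow>
           (is_MV A \<and> sat_id A e \<and> sat_q A (qi5 q))"
proof (intro allI iffI conjI)
  have q: "0 < q"
    using assms(1) by (simp add: prime_gt_0_nat)
  fix A :: "'a mvalg"
  {
    assume Q: "in_Q A (prod_alg (LV q) (LV 1))"
    show "is_MV A"
      using is_MV_if_in_Q[OF Q] .
    show "sat_id A e"
      using assms(3) is_MV_if_in_Q[OF Q] in_V_if_in_Q[OF q Q] by blast
    show "sat_q A (qi5 q)"
      using Q sat_q_prod_qi5 unfolding in_Q_def by blast
  }
  assume R: "is_MV A \<and> sat_id A e \<and> sat_q A (qi5 q)"
  then have V: "in_V A (LV q)"
    using assms(3) by blast
  show "in_Q A (prod_alg (LV q) (LV 1))"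
    unfolding in_Q_def
  proof (intro conjI allI impI)
    show "mv_struct A"
      using R by (simp add: is_MV_def)
    fix Q assume "sat_q (prod_alg (LV q) (LV 1)) Q"
    then show "sat_q A Q"
      using sat_q_if_sat_q_prod[OF q _ V, of "fst Q" "fst (snd Q)" "snd (snd Q)"] R by simp
  qed
qed

end
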